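(* Consider the algorithm described in the context, suppose it does not terminate finitely, and suppose there is $\sigma_{\min}>0$ with $\sigma_{\min}(J_k)\ge\sigma_{\min}$ for all $k\in\mathbb{N}$ (smallest singular value). If $J_k^Tc_k\ne0$, then $\|c_k+J_ks_k\|_2\le\rho_k\|c_k\|_2$, where $$\rho_k:=\sqrt{\max\big\{1-\kappa_v\alpha_k\sigma_{\min}^2,\ 1-\sigma_{\min}^2/\kappa_{\nabla c}^2\big\}}\in[0,1).$$
   Context: Problem: $\min_{x\in\mathbb{R}^n} f(x)+r(x)$ subject to $c(x)=0$, where $f:\mathbb{R}^n\to\mathbb{R}$ and $c:\mathbb{R}^n\to\mathbb{R}^m$ ($m\le n$) are continuously differentiable and $r:\mathbb{R}^n\to\mathbb{R}_{\ge 0}$ is convex. Write $g(x)=\nabla f(x)$, $J(x)=\nabla c(x)^T$, and $f_k=f(x_k)$, $g_k=g(x_k)$, $c_k=c(x_k)$, $J_k=J(x_k)$, $r_k=r(x_k)$. All norms are Euclidean (spectral norm for matrices). Merit function: $\Phi_\tau(x)=\tau(f(x)+r(x))+\|c(x)\|_2$. Algorithm: inputs $x_0$, $\alpha_0>0$, $\tau_{-1}>0$; constants $\kappa_v>0$, $\sigma_c,\epsilon_\tau,\xi,\eta\in(0,1)$, $\sigma_u\in(0,1/2]$, $\bar\sigma_u:=\sigma_u+\tfrac12$. For $k=0,1,\dots$: 1. If $J_k^Tc_k\ne0$, compute $v_k$ with $v_k\in\mathrm{Range}(J_k^T)$, $\|v_k\|_2\le\kappa_v\alpha_k\|J_k^Tc_k\|_2$,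 $\|c_k+J_kv_k\|_2\le\|c_k+J_kv_k^c\|_2$, where $v_k^c=-\beta_k^cJ_k^Tc_k$ with $\beta_k^c$ minimizing $\tfrac12\|c_k-\beta J_kJ_k^Tc_k\|_2^2$ over $0\le\beta\le\kappa_v\alpha_k$. Otherwise set $v_k=0$, and if $c_k\ne0$ terminate. 2. Let $u_k$ be the unique minimizer of $g_k^Tu+\tfrac1{2\alpha_k}\|u\|_2^2+r(x_k+v_k+u)$ subject to $J_ku=0$; set $s_k=v_k+u_k$. If $s_k=0$, terminate. 3. Let $D_k:=g_k^Ts_k+\bar\sigma_u\|s_k\|_2^2/\alpha_k+r(x_k+s_k)-r_k$; $\tau_{k,\mathrm{trial}}=\infty$ if $D_k\le0$, else $\tau_{k,\mathrm{trial}}=(1-\sigma_c)(\|c_k\|_2-\|c_k+J_kv_k\|_2)/D_k$. Set $\tau_k=\tau_{k-1}$ if $\tau_{k-1}\le\tau_{k,\mathrm{trial}}$, else $\tau_k=\min\{(1-\epsilon_\tau)\tau_{k-1},\tau_{k,\mathrm{trial}}\}$. 4. With $\Delta q_k(s,\tau):=-\tau(g_k^Ts+\tfrac1{2\alpha_k}\|s\|_2^2+r(x_k+s)-r_k)+\|c_k\|_2-\|c_k+J_ks\|_2$: if $\Phi_{\tau_k}(x_k+s_k)\le\Phi_{\tau_k}(x_k)-\eta\Delta q_k(s_k,\tau_k)$ set $x_{k+1}=x_k+s_k$, $\alpha_{k+1}=\alpha_k$; else $x_{k+1}=x_k$, $\alpha_{k+1}=\xi\alpha_k$. Standing assumption: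 there is an open convex set $\mathcal X$ containing all iterates $x_k$ and trial points $x_k+s_k$ such that $f$ is bounded below on $\mathcal X$, $\nabla f$ is bounded and Lipschitz continuous on $\mathcal X$, $c$ is bounded on $\mathcal X$, $\|J(x)\|_2\le\kappa_{\nabla c}$ for $x\in\mathcal X$ (constant $\kappa_{\nabla c}>0$) and $J$ is Lipschitz on $\mathcal X$, and all subgradients of $r$ at points of $\mathcal X$ are uniformly bounded in norm. *)

theory Defs
  imports "HOL-Analysis.Analysis"
begin

text \<open>Points live in real^'n, constraint values in real^'m; the Jacobian J x is an
 m x n matrix (type real^'n^'m).  Spectral norm of a matrix A is onorm (\<lambda>h. A *v h).\<close>

text \<open>Smallest singular value of a (wide, m \<le> n) matrix A: square root of the smallest
 eigenvalue of A A^T.\<close>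
definition sigma_min_sv :: "real^'n^'m \<Rightarrow> real" where
  "sigma_min_sv A = sqrt (Inf {lam. \<exists>y. y \<noteq> 0 \<and> (A ** transpose A) *v y = lam *\<^sub>R y})"

definition problem_data ::
  "(real^'n \<Rightarrow> real) \<Rightarrow> (real^'n \<Rightarrow> real^'n) \<Rightarrow> (real^'n \<Rightarrow> real)
   \<Rightarrow> (real^'n \<Rightarrow> real^'m) \<Rightarrow> (real^'n \<Rightarrow> real^'n^'m) \<Rightarrow> bool" where
  "problem_data f g r c J \<longleftrightarrow>
     (\<forall>x. (f has_derivative (\<lambda>h. g x \<bullet> h)) (at x)) \<and> continuous_on UNIV g \<and>
     (\<forall>x. (c has_derivative (\<lambda>h. J x *v h)) (at x)) \<and> continuous_on UNIV J \<and>
     convex_on UNIV r \<and> (\<forall>x. 0 \<le> r x)"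

definition merit :: "(real^'n \<Rightarrow> real) \<Rightarrow> (real^'n \<Rightarrow> real) \<Rightarrow> (real^'n \<Rightarrow> real^'m)
   \<Rightarrow> real \<Rightarrow> real^'n \<Rightarrow> real" where
  "merit f r c tau x = tau * (f x + r x) + norm (c x)"

definition model_red :: "(real^'n \<Rightarrow> real^'n) \<Rightarrow> (real^'n \<Rightarrow> real) \<Rightarrow> (real^'n \<Rightarrow> real^'m)
   \<Rightarrow> (real^'n \<Rightarrow> real^'n^'m) \<Rightarrow> real^'n \<Rightarrow> real \<Rightarrow> real^'n \<Rightarrow> real \<Rightarrow> real" where
  "model_red g r c J xk ak s tau =
     - tau * (g xk \<bullet> s + norm s ^ 2 / (2 * ak) + r (xk + s) - r xk)
     + norm (c xk) - norm (c xk + J xk *v s)"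

text \<open>The sequences x, alpha, tau, v, u (with s_k = v_k + u_k) are generated by the algorithm
 with inputs x0, alpha0, tau_{-1} = taum1 and constants kv, sc, et, xi, eta, su.\<close>
definition algo_run ::
  "(real^'n \<Rightarrow> real) \<Rightarrow> (real^'n \<Rightarrow> real^'n) \<Rightarrow> (real^'n \<Rightarrow> real)
   \<Rightarrow> (real^'n \<Rightarrow> real^'m) \<Rightarrow> (real^'n \<Rightarrow> real^'n^'m)
   \<Rightarrow> real \<Rightarrow> real \<Rightarrow> real \<Rightarrow> real \<Rightarrow> real \<Rightarrow> real
   \<Rightarrow> real^'n \<Rightarrow> real \<Rightarrow> real
   \<Rightarrow> (nat \<Rightarrow> real^'n) \<Rightarrow> (nat \<Rightarrow> real) \<Rightarrow> (nat \<Rightarrow> real)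
   \<Rightarrow> (nat \<Rightarrow> real^'n) \<Rightarrow> (nat \<Rightarrow> real^'n) \<Rightarrow> bool" where
  "algo_run f g r c J kv sc et xi eta su x0 alpha0 taum1 x alpha tau v u \<longleftrightarrow>
     x 0 = x0 \<and> alpha 0 = alpha0 \<and>
     (\<forall>k. let xk = x k; gk = g xk; ck = c xk; Jk = J xk; ak = alpha k;
              tprev = (if k = 0 then taum1 else tau (k - 1)); sk = v k + u k
          in
          \<comment> \<open>Step 1\<close>
          (if transpose Jk *v ck \<noteq> 0 then
             v k \<in> range (\<lambda>y. transpose Jk *v y) \<and>
             norm (v k) \<le> kv * ak * norm (transpose Jk *v ck) \<and>
             (\<exists>\<beta>. 0 \<le> \<beta> \<and> \<beta> \<le> kv * ak \<and>
                 (\<forall>\<beta>'. 0 \<le> \<beta>' \<and> \<beta>' \<le> kv * ak \<longrightarrow>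
                    norm (ck - \<beta> *\<^sub>R (Jk *v (transpose Jk *v ck))) ^ 2 / 2
                    \<le> norm (ck - \<beta>' *\<^sub>R (Jk *v (transpose Jk *v ck))) ^ 2 / 2) \<and>
                 norm (ck + Jk *v v k) \<le> norm (ck + Jk *v (- (\<beta> *\<^sub>R (transpose Jk *v ck)))))
           else v k = 0) \<and>
          \<comment> \<open>Step 2\<close>
          Jk *v u k = 0 \<and>
          (\<forall>u'. Jk *v u' = 0 \<longrightarrow>
              gk \<bullet> u k + norm (u k) ^ 2 / (2 * ak) + r (xk + v k + u k)
              \<le> gk \<bullet> u' + norm u' ^ 2 / (2 * ak) + r (xk + v k + u')) \<and>
          \<comment> \<open>Step 3\<close>
          (let D = gk \<bullet> sk + (su + 1/2) * norm sk ^ 2 / ak + r (xk + sk) - r xk;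
               ttrial = (1 - sc) * (norm ck - norm (ck + Jk *v v k)) / D
           in tau k = (if D \<le> 0 \<or> tprev \<le> ttrial then tprev
                       else min ((1 - et) * tprev) ttrial)) \<and>
          \<comment> \<open>Step 4\<close>
          (if merit f r c (tau k) (xk + sk)
                \<le> merit f r c (tau k) xk - eta * model_red g r c J xk ak sk (tau k)
           then x (Suc k) = xk + sk \<and> alpha (Suc k) = ak
           else x (Suc k) = xk \<and> alpha (Suc k) = xi * ak))"

definition no_termination ::
  "(real^'n \<Rightarrow> real^'m) \<Rightarrow> (real^'n \<Rightarrow> real^'n^'m)
   \<Rightarrow> (nat \<Rightarrow> real^'n) \<Rightarrow> (nat \<Rightarrow> real^'n) \<Rightarrow> (nat \<Rightarrow> real^'n) \<Rightarrow> bool" where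
  "no_termination c J x v u \<longleftrightarrow>
     (\<forall>k. (transpose (J (x k)) *v c (x k) = 0 \<longrightarrow> c (x k) = 0) \<and> v k + u k \<noteq> 0)"

definition standing_assumption ::
  "(real^'n \<Rightarrow> real) \<Rightarrow> (real^'n \<Rightarrow> real^'n) \<Rightarrow> (real^'n \<Rightarrow> real)
   \<Rightarrow> (real^'n \<Rightarrow> real^'m) \<Rightarrow> (real^'n \<Rightarrow> real^'n^'m) \<Rightarrow> real
   \<Rightarrow> (nat \<Rightarrow> real^'n) \<Rightarrow> (nat \<Rightarrow> real^'n) \<Rightarrow> (nat \<Rightarrow> real^'n) \<Rightarrow> bool" where
  "standing_assumption f g r c J knc x v u \<longleftrightarrow>
     (\<exists>X. open X \<and> convex X \<and> (\<forall>k. x k \<in> X \<and> x k + (v k + u k) \<in> X) \<and>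
        bdd_below (f ` X) \<and> bounded (g ` X) \<and>
        (\<exists>L. \<forall>y\<in>X. \<forall>z\<in>X. norm (g y - g z) \<le> L * dist y z) \<and>
        bounded (c ` X) \<and>
        (\<forall>y\<in>X. onorm (\<lambda>h. J y *v h) \<le> knc) \<and>
        (\<exists>L. \<forall>y\<in>X. \<forall>z\<in>X. onorm (\<lambda>h. (J y - J z) *v h) \<le> L * dist y z) \<and>
        (\<exists>B. \<forall>y\<in>X. \<forall>w. (\<forall>z. r z \<ge> r y + w \<bullet> (z - y)) \<longrightarrow> norm w \<le> B))"

end

theory Submission
  imports Defs
begin

(* Write A = J_k, c = c_k and K for the bound on the spectral norm of A. For 0 <= beta <= 1/K^2 the
   Cauchy step -beta A^T c decreases the squared linearised residual by at least
   beta |A^T c|^2 >= beta sigma_min^2 |c|^2. The normal step is at least as good as the Cauchy step,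
   whose exact line search over [0, kv alpha_k] beats beta = min (kv alpha_k) (1/K^2), and the
   tangential step lies in the null space of A. The bound |A^T y| >= sigma_min(A) |y| holds because
   the minimum of the Rayleigh quotient of A A^T on the unit sphere is an eigenvalue, hence the
   smallest one. *)

lemma inner_matrix_vector_transpose:
  fixes A :: "real^'n^'m"
  shows "(A *v x) \<bullet> y = x \<bullet> (transpose A *v y)"
  using dot_lmul_matrix[of x "transpose A" y] by simp

lemma norm_transpose_mult_sq:
  fixes A :: "real^'n^'m"
  shows "norm (transpose A *v y) ^ 2 = y \<bullet> ((A ** transpose A) *v y)"
  by (simp add: power2_norm_eq_inner dot_lmul_matrix flip: matrix_vector_mul_assoc)

lemma nonneg_quadratic_imp_linear_coeff_zero:
  fixes a b :: real
  assumes "\<And>t. 0 \<le> a * t + b * t\<^sup>2"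
  shows "a = 0"
proof (rule ccontr)
  assume "a \<noteq> 0"
  define d where "d = \<bar>b\<bar> + 1"
  have "d > 0" "b < d" by (auto simp: d_def)
  have "a * (- a / d) + b * (- a / d)\<^sup>2 = a\<^sup>2 / d * (b / d - 1)"
    using \<open>d > 0\<close> by (simp add: field_simps power2_eq_square)
  also have "\<dots> < 0"
    using \<open>a \<noteq> 0\<close> \<open>d > 0\<close> \<open>b < d\<close> by (intro mult_pos_neg) auto
  finally show False using assms[of "- a / d"] by simp
qed

lemma Rayleigh_minimizer_is_eigenvector:
  fixes A :: "real^'n^'m"
  assumes lower: "\<And>y. lam * norm y ^ 2 \<le> norm (transpose A *v y) ^ 2"
    and attained: "norm (transpose A *v y0) ^ 2 = lam * norm y0 ^ 2"
  shows "(A ** transpose A) *v y0 = lam *\<^sub>R y0"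
proof -
  define \<phi> where "\<phi> y = norm (transpose A *v y) ^ 2 - lam * norm y ^ 2" for y
  define e where "e = (A ** transpose A) *v y0 - lam *\<^sub>R y0"
  have cross: "(transpose A *v y0) \<bullet> (transpose A *v e) - lam * (y0 \<bullet> e) = e \<bullet> e"
    by (simp add: e_def inner_diff_left inner_matrix_vector_transpose matrix_vector_mul_assoc[symmetric])
  have expand: "\<phi> (y0 + t *\<^sub>R e) = \<phi> y0 + 2 * (e \<bullet> e) * t + \<phi> e * t\<^sup>2" for t
    using cross unfolding \<phi>_def power2_norm_eq_inner
    by (simp add: matrix_vector_right_distrib matrix_vector_mult_scaleR inner_add_left inner_add_right
        inner_commute algebra_simps power2_eq_square)
  have "0 \<le> 2 * (e \<bullet> e) * t + \<phi> e * t\<^sup>2" for t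
    using expand[of t] lower[of "y0 + t *\<^sub>R e"] attained by (simp add: \<phi>_def)
  then have "2 * (e \<bullet> e) = 0"
    by (rule nonneg_quadratic_imp_linear_coeff_zero)
  then show ?thesis by (simp add: e_def)
qed

lemma Rayleigh_quotient_attains_min:
  fixes A :: "real^'n^'m"
  obtains y0 :: "real^'m" where "norm y0 = 1"
    and "\<And>y. norm (transpose A *v y0) ^ 2 * norm y ^ 2 \<le> norm (transpose A *v y) ^ 2"
proof -
  let ?Q = "\<lambda>y. norm (transpose A *v y) ^ 2"
  have "continuous_on (sphere 0 1) ?Q"
    by (intro continuous_intros linear_continuous_on bounded_linear_intros)
  moreover have "sphere (0::real^'m) 1 \<noteq> {}" by simp
  ultimately obtain y0 where y0: "y0 \<in> sphere 0 1" "\<And>y. y \<in> sphere 0 1 \<Longrightarrow> ?Q y0 \<le> ?Q y"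
    using continuous_attains_inf[OF compact_sphere] by blast
  have "?Q y0 * norm y ^ 2 \<le> ?Q y" for y
  proof (cases "y = 0")
    case False
    then have "?Q y0 \<le> ?Q (y /\<^sub>R norm y)" by (intro y0(2)) simp
    also have "\<dots> = ?Q y / norm y ^ 2"
      by (simp add: matrix_vector_mult_scaleR power2_eq_square divide_inverse)
    finally show ?thesis using False by (simp add: field_simps)
  qed simp
  with y0(1) show thesis by (intro that) auto
qed

lemma sigma_min_sv_mult_le_norm_transpose:
  fixes A :: "real^'n^'m"
  shows "sigma_min_sv A * norm y \<le> norm (transpose A *v y)"
proof -
  define S where "S = {lam. \<exists>y. y \<noteq> 0 \<and> (A ** transpose A) *v y = lam *\<^sub>R y}"
  obtain y0 where y0: "norm y0 = 1"
    and minimal: "\<And>y. norm (transpose A *v y0) ^ 2 * norm y ^ 2 \<le> norm (transpose A *v y) ^ 2"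
    using Rayleigh_quotient_attains_min by blast
  define lam where "lam = norm (transpose A *v y0) ^ 2"
  have "lam \<in> S"
    using y0 minimal Rayleigh_minimizer_is_eigenvector[of lam A y0]
    unfolding S_def lam_def by (intro CollectI exI[of _ y0]) auto
  moreover have "lam \<le> mu" if "mu \<in> S" for mu
  proof -
    obtain y where y: "y \<noteq> 0" "(A ** transpose A) *v y = mu *\<^sub>R y"
      using \<open>mu \<in> S\<close> unfolding S_def by blast
    have "lam * norm y ^ 2 \<le> norm (transpose A *v y) ^ 2" using minimal by (simp add: lam_def)
    also have "\<dots> = mu * norm y ^ 2"
      unfolding norm_transpose_mult_sq y(2) by (simp add: power2_norm_eq_inner)
    finally show ?thesis using y(1) by simp
  qed
  ultimately have "sigma_min_sv A = sqrt lam"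
    unfolding sigma_min_sv_def S_def[symmetric] by (simp add: cInf_eq_minimum)
  also have "sqrt lam * norm y = sqrt (lam * norm y ^ 2)" by (simp add: real_sqrt_mult)
  also have "\<dots> \<le> norm (transpose A *v y)"
    using minimal[of y] by (simp add: lam_def real_le_lsqrt real_sqrt_le_iff)
  finally show ?thesis .
qed

lemma norm_Cauchy_step_sq_le:
  fixes A :: "real^'n^'m" and c :: "real^'m"
  assumes bound: "\<And>h. norm (A *v h) \<le> K * norm h"
    and sigma: "0 \<le> \<sigma>" "\<sigma> * norm c \<le> norm (transpose A *v c)"
    and step: "0 \<le> \<beta>" "\<beta> * K\<^sup>2 \<le> 1"
  shows "norm (c - \<beta> *\<^sub>R (A *v (transpose A *v c))) ^ 2 \<le> (1 - \<beta> * \<sigma>\<^sup>2) * norm c ^ 2"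
proof -
  define w where "w = transpose A *v c"
  define q where "q = A *v w"
  have "c \<bullet> q = norm w ^ 2"
    by (simp add: q_def w_def inner_matrix_vector_transpose power2_norm_eq_inner inner_commute[of c])
  then have expand: "norm (c - \<beta> *\<^sub>R q) ^ 2 = norm c ^ 2 - 2 * \<beta> * norm w ^ 2 + \<beta>\<^sup>2 * norm q ^ 2"
    unfolding power2_norm_eq_inner
    by (simp add: inner_diff_left inner_diff_right inner_commute algebra_simps power2_eq_square)
  have "norm q ^ 2 \<le> (K * norm w) ^ 2"
    unfolding q_def by (intro power_mono bound) simp
  then have "\<beta>\<^sup>2 * norm q ^ 2 \<le> \<beta>\<^sup>2 * (K * norm w) ^ 2"
    by (rule mult_left_mono) simp
  also have "\<dots> = \<beta> * (\<beta> * K\<^sup>2) * norm w ^ 2"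
    by (simp add: power_mult_distrib power2_eq_square)
  also have "\<dots> \<le> \<beta> * norm w ^ 2"
    using step by (intro mult_right_mono mult_left_le) simp_all
  finally have "norm (c - \<beta> *\<^sub>R q) ^ 2 \<le> norm c ^ 2 - \<beta> * norm w ^ 2"
    using expand by linarith
  also have "\<dots> \<le> norm c ^ 2 - \<beta> * (\<sigma> * norm c) ^ 2"
    using sigma step unfolding w_def by (intro diff_left_mono mult_left_mono power_mono) auto
  finally show ?thesis by (simp add: q_def w_def algebra_simps power_mult_distrib)
qed

lemma Cauchy_point_residual_sq_le:
  fixes A :: "real^'n^'m" and c :: "real^'m"
  defines "q \<equiv> A *v (transpose A *v c)"
  assumes bound: "\<And>h. norm (A *v h) \<le> K * norm h" "0 < K"
    and sigma: "0 \<le> \<sigma>" "\<sigma> * norm c \<le> norm (transpose A *v c)"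
    and "0 \<le> \<beta>max"
    and minimal: "\<And>\<beta>'. 0 \<le> \<beta>' \<Longrightarrow> \<beta>' \<le> \<beta>max \<Longrightarrow> norm (c - \<beta> *\<^sub>R q) \<le> norm (c - \<beta>' *\<^sub>R q)"
  shows "norm (c - \<beta> *\<^sub>R q) ^ 2 \<le> max (1 - \<beta>max * \<sigma>\<^sup>2) (1 - \<sigma>\<^sup>2 / K\<^sup>2) * norm c ^ 2"
proof -
  define \<beta>' where "\<beta>' = min \<beta>max (1 / K\<^sup>2)"
  have "\<beta>' * K\<^sup>2 \<le> 1"
    using \<open>0 < K\<close> by (simp add: \<beta>'_def min_mult_distrib_right)
  have "norm (c - \<beta> *\<^sub>R q) ^ 2 \<le> norm (c - \<beta>' *\<^sub>R q) ^ 2"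
    using \<open>0 \<le> \<beta>max\<close> by (intro power_mono minimal) (auto simp: \<beta>'_def)
  also have "\<dots> \<le> (1 - \<beta>' * \<sigma>\<^sup>2) * norm c ^ 2"
    unfolding q_def using bound sigma \<open>0 \<le> \<beta>max\<close> \<open>\<beta>' * K\<^sup>2 \<le> 1\<close>
    by (intro norm_Cauchy_step_sq_le) (auto simp: \<beta>'_def)
  also have "1 - \<beta>' * \<sigma>\<^sup>2 = max (1 - \<beta>max * \<sigma>\<^sup>2) (1 - \<sigma>\<^sup>2 / K\<^sup>2)"
    by (simp add: \<beta>'_def min_mult_distrib_right)
  finally show ?thesis .
qed

lemma algo_run_alpha_pos:
  assumes "algo_run f g r c J kv sc et xi eta su x0 alpha0 taum1 x alpha tau v u"
    and "0 < alpha0" "0 < xi"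
  shows "0 < alpha k"
proof (induction k)
  case 0
  then show ?case using assms unfolding algo_run_def by simp
next
  case (Suc k)
  from assms(1) have "alpha (Suc k) = alpha k \<or> alpha (Suc k) = xi * alpha k"
    unfolding algo_run_def Let_def by (metis (no_types, lifting))
  then show ?case using Suc assms(3) by auto
qed

lemma algo_run_normal_step:
  fixes J :: "real^'n \<Rightarrow> real^'n^'m"
  assumes "algo_run f g r c J kv sc et xi eta su x0 alpha0 taum1 x alpha tau v u"
    and "transpose (J (x k)) *v c (x k) \<noteq> 0"
  defines "q \<equiv> J (x k) *v (transpose (J (x k)) *v c (x k))"
  obtains \<beta> where "\<And>\<beta>'. 0 \<le> \<beta>' \<Longrightarrow> \<beta>' \<le> kv * alpha k \<Longrightarrow>
           norm (c (x k) - \<beta> *\<^sub>R q) \<le> norm (c (x k) - \<beta>' *\<^sub>R q)"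
    and "norm (c (x k) + J (x k) *v (v k + u k)) \<le> norm (c (x k) - \<beta> *\<^sub>R q)"
proof -
  let ?c = "c (x k)" and ?A = "J (x k)"
  obtain \<beta> where minimal: "\<And>\<beta>'. 0 \<le> \<beta>' \<Longrightarrow> \<beta>' \<le> kv * alpha k \<Longrightarrow>
                norm (?c - \<beta> *\<^sub>R q) ^ 2 / 2 \<le> norm (?c - \<beta>' *\<^sub>R q) ^ 2 / 2"
    and v: "norm (?c + ?A *v v k) \<le> norm (?c + ?A *v (- (\<beta> *\<^sub>R (transpose ?A *v ?c))))"
    and "?A *v u k = 0"
    using assms(1,2) unfolding algo_run_def Let_def q_def by (metis (no_types, lifting))
  show thesis
  proof (rule that)
    show "norm (?c - \<beta> *\<^sub>R q) \<le> norm (?c - \<beta>' *\<^sub>R q)"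
      if "0 \<le> \<beta>'" "\<beta>' \<le> kv * alpha k" for \<beta>'
      using minimal[OF that] by simp
    have "?c + ?A *v (v k + u k) = ?c + ?A *v v k"
      using \<open>?A *v u k = 0\<close> by (simp add: matrix_vector_right_distrib)
    moreover have "?A *v (- (\<beta> *\<^sub>R (transpose ?A *v ?c))) = - (\<beta> *\<^sub>R q)"
      by (simp add: q_def matrix_vector_mult_scaleR flip: scaleR_minus_left)
    ultimately show "norm (?c + ?A *v (v k + u k)) \<le> norm (?c - \<beta> *\<^sub>R q)"
      using v by simp
  qed
qed

lemma standing_assumption_Jacobian_bound:
  assumes "standing_assumption f g r c J knc x v u"
  shows "norm (J (x k) *v h) \<le> knc * norm h"
proof -
  obtain X where "x k \<in> X" "\<forall>y\<in>X. onorm (\<lambda>h. J y *v h) \<le> knc"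
    using assms unfolding standing_assumption_def by blast
  then have "onorm (\<lambda>h. J (x k) *v h) \<le> knc" by blast
  then show ?thesis
    using onorm[OF matrix_vector_mul_bounded_linear, of "J (x k)" h]
    by (meson mult_right_mono norm_ge_zero order_trans)
qed

theorem lemma3p12:
  fixes f :: "real^'n \<Rightarrow> real" and g :: "real^'n \<Rightarrow> real^'n" and r :: "real^'n \<Rightarrow> real"
    and c :: "real^'n \<Rightarrow> real^'m" and J :: "real^'n \<Rightarrow> real^'n^'m"
    and kv sc et xi eta su alpha0 taum1 knc smin :: real and x0 :: "real^'n"
    and x v u :: "nat \<Rightarrow> real^'n" and alpha tau :: "nat \<Rightarrow> real" and k :: nat
  assumes "CARD('m) \<le> CARD('n)"
    and "problem_data f g r c J"
    and "kv > 0" and "0 < sc" "sc < 1" and "0 < et" "et < 1" and "0 < xi" "xi < 1"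
    and "0 < eta" "eta < 1" and "0 < su" "su \<le> 1/2"
    and "alpha0 > 0" and "taum1 > 0" and "knc > 0"
    and "standing_assumption f g r c J knc x v u"
    and "algo_run f g r c J kv sc et xi eta su x0 alpha0 taum1 x alpha tau v u"
    and "no_termination c J x v u"
    and "smin > 0" and "\<forall>j. sigma_min_sv (J (x j)) \<ge> smin"
    and "transpose (J (x k)) *v c (x k) \<noteq> 0"
  shows "let rho = sqrt (max (1 - kv * alpha k * smin ^ 2) (1 - smin ^ 2 / knc ^ 2))
         in norm (c (x k) + J (x k) *v (v k + u k)) \<le> rho * norm (c (x k))
            \<and> 0 \<le> rho \<and> rho < 1"
proof -
  let ?c = "c (x k)" and ?A = "J (x k)"
  let ?q = "?A *v (transpose ?A *v ?c)"
  let ?M = "max (1 - kv * alpha k * smin ^ 2) (1 - smin ^ 2 / knc ^ 2)"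
  obtain \<beta> where minimal: "\<And>\<beta>'. 0 \<le> \<beta>' \<Longrightarrow> \<beta>' \<le> kv * alpha k \<Longrightarrow>
        norm (?c - \<beta> *\<^sub>R ?q) \<le> norm (?c - \<beta>' *\<^sub>R ?q)"
    and step: "norm (?c + ?A *v (v k + u k)) \<le> norm (?c - \<beta> *\<^sub>R ?q)"
    using algo_run_normal_step[OF assms(18,22)] by blast
  have "0 < alpha k" using algo_run_alpha_pos assms(8,14,18) by blast
  have sigma: "smin * norm ?c \<le> norm (transpose ?A *v ?c)"
    using assms(21) sigma_min_sv_mult_le_norm_transpose[of ?A ?c]
    by (meson mult_right_mono norm_ge_zero order_trans)
  have "norm (?c - \<beta> *\<^sub>R ?q) ^ 2 \<le> ?M * norm ?c ^ 2"
    by (rule Cauchy_point_residual_sq_le[OF standing_assumption_Jacobian_bound[OF assms(17)]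
          \<open>0 < knc\<close> _ sigma _ minimal])
      (use \<open>0 < smin\<close> \<open>0 < kv\<close> \<open>0 < alpha k\<close> in auto)
  with step have residual: "norm (?c + ?A *v (v k + u k)) ^ 2 \<le> ?M * norm ?c ^ 2"
    by (meson norm_ge_zero order_trans power_mono)
  then have "0 \<le> ?M * norm ?c ^ 2" by (meson order_trans zero_le_power2)
  moreover have "?c \<noteq> 0" using assms(22) by auto
  \<comment> \<open>sqrt is odd, so \<open>0 \<le> rho\<close> needs \<open>0 \<le> ?M\<close>, which is not visible from the formula for ?M.\<close>
  ultimately have "0 \<le> ?M" by (simp add: zero_le_mult_iff)
  have "?M < 1" using \<open>0 < smin\<close> \<open>0 < kv\<close> \<open>0 < knc\<close> \<open>0 < alpha k\<close> by simp
  have "norm (?c + ?A *v (v k + u k)) \<le> sqrt ?M * norm ?c"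
    using real_sqrt_le_mono[OF residual] by (simp add: real_sqrt_mult)
  then show ?thesis
    using \<open>0 \<le> ?M\<close> \<open>?M < 1\<close> by (simp add: Let_def)
qed

end
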